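(* For $\theta\in(0,1)$ define $P_0(\theta)=1-\theta$, $P_r(\theta)=r(1-\theta)\sum_{i=r}^{\infty}\frac{\theta^i}{i}$ for integers $r\ge1$, and $P(\theta)=\max_{r\ge 0}P_r(\theta)$. Let $E_1(x)=\int_x^\infty \frac{e^{-t}}{t}\,dt$ for $x>0$, let $F(x)=xE_1(x)$, let $\alpha\in(0,\infty)$ be the point where $F$ attains its maximum on $(0,\infty)$ (so $F'(\alpha)=0$), and let $\beta=F(\alpha)$ (numerically $\alpha\approx 0.434818$, $\beta\approx 0.281494$). Then as $\theta\to 1^-$, the optimal strategy approaches the positional strategy rejecting $\frac{\alpha}{1-\theta}$ initial candidates: if $r^*(\theta)$ denotes an index attaining $P(\theta)=P_{r^*(\theta)}(\theta)$, then $(1-\theta)\,r^*(\theta)\to\alpha$, and \[ \lim_{\theta\to 1^-}P(\theta)=\beta. \]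
   Context: Here $P_r(\theta)$ is the limit as $N\to\infty$ of the probability of winning the weighted game of best choice with the $r$-positional strategy: a permutation $\pi$ of $\{1,\dots,N\}$ is drawn with probability proportional to $\theta^{\pi^{-1}(N)-1}$, the player rejects the first $r$ candidates and then accepts the next candidate better than all previous ones, and wins if the accepted candidate has rank $N$ (best). *)

theory Defs
  imports "HOL-Analysis.Analysis"
begin

text \<open>Limiting win probability of the r-positional strategy in the weighted game.\<close>
definition Pr :: "real \<Rightarrow> nat \<Rightarrow> real" where
  "Pr \<theta> r = (if r = 0 then 1 - \<theta>
     else real r * (1 - \<theta>) * (\<Sum>i. \<theta> ^ (r + i) / real (r + i)))"

definition Popt :: "real \<Rightarrow> real" where
  "Popt \<theta> = (SUP r. Pr \<theta> r)"

definition E1 :: "real \<Rightarrow> real" where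
  "E1 x = integral {x..} (\<lambda>t. exp (- t) / t)"

definition F :: "real \<Rightarrow> real" where
  "F x = x * E1 x"

end

theory Submission
  imports Defs "HOL-Real_Asymp.Real_Asymp"
begin

text \<open>
  Put \<open>L = - ln \<theta>\<close> and \<open>g t = exp (- t) / t\<close>. Then \<open>\<theta>^k / k = L * g (L * k)\<close>, so the tail sum in
  \<open>Pr \<theta> r\<close> is a Riemann sum with step \<open>L\<close> for \<open>E1 (L * r)\<close>, the integral of \<open>g\<close> over \<open>[L * r, \<infinity>)\<close>.
  As \<open>g\<close> is decreasing, \<open>(1 - \<theta>) / L * F (L * r) \<le> Pr \<theta> r \<le> F (L * r) + (1 - \<theta>)\<close>, and
  \<open>(1 - \<theta>) / L \<rightarrow> 1\<close>. Hence \<open>Popt \<theta> \<rightarrow> max F = \<beta>\<close> (take \<open>L * r\<close> just above \<open>\<alpha>\<close>). For an optimal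
  index \<open>r\<close> this forces \<open>F (L * r) \<rightarrow> \<beta>\<close>, and since \<open>F\<close> is unimodal (its derivative \<open>E1 x - exp (- x)\<close>
  decreases on \<open>(0, 1]\<close> and is negative beyond), \<open>L * r \<rightarrow> \<alpha>\<close>.
\<close>

definition E1_integrand :: "real \<Rightarrow> real" where
  "E1_integrand t = exp (- t) / t"

lemma E1_integrand_pos: "x > 0 \<Longrightarrow> E1_integrand x > 0"
  by (simp add: E1_integrand_def)

lemma E1_integrand_antimono: assumes "0 < x" "x \<le> y" shows "E1_integrand y \<le> E1_integrand x"
  unfolding E1_integrand_def using assms by (intro frac_le) auto

lemma continuous_on_E1_integrand: "a > 0 \<Longrightarrow> continuous_on {a..b} E1_integrand"
  unfolding E1_integrand_def by (intro continuous_intros) auto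

lemma E1_integrand_le_exp: "0 < a \<Longrightarrow> a \<le> x \<Longrightarrow> E1_integrand x \<le> exp (- x) / a"
  by (auto simp: E1_integrand_def divide_simps mult_left_mono)

lemma E1_integrand_integrable: assumes "a > 0" shows "E1_integrand integrable_on {a..}"
proof (rule measurable_bounded_by_integrable_imp_integrable_real)
  show "E1_integrand \<in> borel_measurable (lebesgue_on {a..})"
    by (rule continuous_imp_measurable_on_sets_lebesgue)
      (use assms in \<open>auto simp: E1_integrand_def intro!: continuous_intros\<close>)
  show "(\<lambda>x. exp (-1 * x) / a) integrable_on {a..}"
    using integrable_on_exp_minus_to_infinity[of 1 a] by (intro integrable_on_divide) auto
  show "\<bar>E1_integrand x\<bar> \<le> exp (-1 * x) / a" if "x \<in> {a..}" for x
    using that assms E1_integrand_le_exp[of a x] E1_integrand_pos[of x] by simp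
qed auto

lemma E1_has_integral: "a > 0 \<Longrightarrow> (E1_integrand has_integral E1 a) {a..}"
  using E1_integrand_integrable unfolding E1_def E1_integrand_def
  by (simp add: has_integral_integral)

lemma E1_split:
  assumes "0 < a" "a \<le> b" shows "E1 a = integral {a..b} E1_integrand + E1 b"
proof -
  have "(E1_integrand has_integral (integral {a..b} E1_integrand + E1 b)) ({a..b} \<union> {b..})"
  proof (rule has_integral_Un)
    show "(E1_integrand has_integral integral {a..b} E1_integrand) {a..b}"
      using assms by (intro integrable_integral integrable_continuous_real continuous_on_E1_integrand)
    show "(E1_integrand has_integral E1 b) {b..}"
      using assms by (intro E1_has_integral) simp
    show "negligible ({a..b} \<inter> {b..})"
      by (rule negligible_subset[of "{b}"]) auto
  qed
  moreover have "{a..b} \<union> {b..} = {a..}" using assms by auto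
  ultimately show ?thesis using E1_has_integral[OF assms(1)] has_integral_unique by metis
qed

lemma E1_le_exp_div: assumes "a > 0" shows "E1 a \<le> exp (- a) / a"
proof -
  have "((\<lambda>x. exp (-1 * x) / a) has_integral (exp (-1 * a) / 1 / a)) {a..}"
    using has_integral_exp_minus_to_infinity[of 1 a] by (intro has_integral_divide) auto
  then show ?thesis
    using has_integral_le[OF E1_has_integral[OF assms]] E1_integrand_le_exp assms by fastforce
qed

lemma E1_nonneg: "a > 0 \<Longrightarrow> 0 \<le> E1 a"
  using has_integral_nonneg[OF E1_has_integral] by (auto simp: E1_integrand_def)

lemma integral_E1_integrand_bounds:
  assumes "0 < a" "a \<le> b"
  shows "(b - a) * E1_integrand b \<le> integral {a..b} E1_integrand"
    and "integral {a..b} E1_integrand \<le> (b - a) * E1_integrand a"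
proof -
  have int: "E1_integrand integrable_on {a..b}"
    using assms by (intro integrable_continuous_real continuous_on_E1_integrand)
  have "integral {a..b} (\<lambda>_. E1_integrand b) \<le> integral {a..b} E1_integrand"
    by (rule integral_le[OF _ int]) (use assms E1_integrand_antimono in auto)
  then show "(b - a) * E1_integrand b \<le> integral {a..b} E1_integrand" using assms by simp
  have "integral {a..b} E1_integrand \<le> integral {a..b} (\<lambda>_. E1_integrand a)"
    by (rule integral_le[OF int]) (use assms E1_integrand_antimono in auto)
  then show "integral {a..b} E1_integrand \<le> (b - a) * E1_integrand a" using assms by simp
qed

lemma E1_pos: assumes "a > 0" shows "E1 a > 0"
proof -
  have "E1 a = integral {a..a+1} E1_integrand + E1 (a+1)" using E1_split assms by simp
  moreover have "E1_integrand (a+1) \<le> integral {a..a+1} E1_integrand"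
    using integral_E1_integrand_bounds(1)[of a "a+1"] assms by simp
  ultimately show ?thesis using E1_integrand_pos[of "a+1"] E1_nonneg[of "a+1"] assms by linarith
qed

lemma E1_has_real_derivative:
  assumes "x > 0" shows "(E1 has_real_derivative - E1_integrand x) (at x)"
proof -
  have ab: "0 < x/2" "x/2 < x" "x < 2*x" using assms by auto
  have "((\<lambda>y. integral {x/2..y} E1_integrand) has_real_derivative E1_integrand x) (at x within {x/2..2*x})"
    by (rule integral_has_real_derivative) (use ab continuous_on_E1_integrand in auto)
  then have "((\<lambda>y. E1 (x/2) - integral {x/2..y} E1_integrand) has_real_derivative - E1_integrand x) (at x)"
    using at_within_Icc_at[OF ab(2,3)] by (auto intro!: derivative_eq_intros)
  then show ?thesis
  proof (rule has_field_derivative_transform_within_open)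
    show "E1 (x/2) - integral {x/2..y} E1_integrand = E1 y" if "y \<in> {x/2<..}" for y
      using E1_split[of "x/2" y] ab that by simp
  qed (use ab in auto)
qed

lemma F_pos: "x > 0 \<Longrightarrow> F x > 0"
  using E1_pos by (simp add: F_def)

lemma F_has_real_derivative:
  assumes "x > 0" shows "(F has_real_derivative E1 x - exp (- x)) (at x)"
proof -
  have "((\<lambda>x. x * E1 x) has_real_derivative 1 * E1 x + (- E1_integrand x) * x) (at x)"
    by (rule DERIV_mult[OF DERIV_ident E1_has_real_derivative[OF assms]])
  then show ?thesis using assms unfolding F_def[abs_def] by (simp add: E1_integrand_def)
qed

lemma isCont_F: "x > 0 \<Longrightarrow> isCont F x"
  using F_has_real_derivative DERIV_isCont by blast

lemma continuous_on_F: "0 < a \<Longrightarrow> continuous_on {a..b} F"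
  by (intro continuous_at_imp_continuous_on ballI isCont_F) auto

lemma F_derivative_neg: assumes "x > 1" shows "E1 x - exp (- x) < 0"
proof -
  have "exp (-x) / x < exp (-x)" using assms by (simp add: divide_simps)
  then show ?thesis using E1_le_exp_div[of x] assms by linarith
qed

text \<open>The second derivative of \<open>F\<close> is \<open>exp (- x) - exp (- x) / x\<close>, negative on \<open>(0, 1)\<close>.\<close>
lemma F_derivative_strict_antimono:
  assumes "0 < x" "x < y" "y \<le> 1" shows "E1 y - exp (- y) < E1 x - exp (- x)"
proof (rule DERIV_neg_imp_decreasing_open[OF assms(2)])
  fix z assume z: "x < z" "z < y"
  then have "((\<lambda>x. E1 x - exp (- x)) has_real_derivative - E1_integrand z + exp (- z)) (at z)"
    using assms by (auto intro!: derivative_eq_intros E1_has_real_derivative)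
  moreover have "exp (- z) < E1_integrand z"
    using z assms by (simp add: E1_integrand_def divide_simps)
  ultimately show "\<exists>d. ((\<lambda>x. E1 x - exp (- x)) has_real_derivative d) (at z) \<and> d < 0"
    by force
next
  show "continuous_on {x..y} (\<lambda>x. E1 x - exp (- x))"
    using assms by (intro continuous_at_imp_continuous_on ballI continuous_intros
        DERIV_isCont[OF E1_has_real_derivative]) auto
qed

lemma E1_tendsto_0: "(E1 \<longlongrightarrow> 0) at_top"
proof (rule tendsto_sandwich[of "\<lambda>_. 0" _ _ "\<lambda>x. exp (- x) / x"])
  show "\<forall>\<^sub>F x in at_top. 0 \<le> E1 x"
    using eventually_gt_at_top[of 0] by eventually_elim (rule E1_nonneg)
  show "\<forall>\<^sub>F x in at_top. E1 x \<le> exp (- x) / x"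
    using eventually_gt_at_top[of 0] by eventually_elim (rule E1_le_exp_div)
  show "((\<lambda>x::real. exp (- x) / x) \<longlongrightarrow> 0) at_top"
    by real_asymp
qed auto

lemma power_div_eq_E1_integrand:
  assumes "0 < \<theta>" "\<theta> < 1" "k > 0"
  shows "\<theta> ^ k / k = - ln \<theta> * E1_integrand (- ln \<theta> * k)"
proof -
  have "exp (- (- ln \<theta> * k)) = \<theta> ^ k"
    using assms by (simp add: powr_def powr_realpow[symmetric] mult.commute)
  then show ?thesis using assms by (simp add: E1_integrand_def)
qed

lemma E1_step_bounds:
  assumes "0 < \<theta>" "\<theta> < 1" "k > 0"
  defines "L \<equiv> - ln \<theta>"
  shows "\<theta> ^ (k+1) / real (k+1) \<le> E1 (L * k) - E1 (L * (k+1))"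
    and "E1 (L * k) - E1 (L * (k+1)) \<le> \<theta> ^ k / k"
proof -
  have L: "L > 0" using assms by simp
  have "E1 (L * k) - E1 (L * (k+1)) = integral {L * k..L * (k+1)} E1_integrand"
    using E1_split[of "L * k" "L * (k+1)"] L assms(3) by simp
  moreover have "L * (k+1) - L * k = L" by (simp add: algebra_simps)
  moreover note power_div_eq_E1_integrand[OF assms(1,2), of k, folded L_def]
    power_div_eq_E1_integrand[OF assms(1,2), of "k+1", folded L_def]
  ultimately show "\<theta> ^ (k+1) / real (k+1) \<le> E1 (L * k) - E1 (L * (k+1))"
    and "E1 (L * k) - E1 (L * (k+1)) \<le> \<theta> ^ k / k"
    using integral_E1_integrand_bounds[of "L * k" "L * (k+1)"] L assms(3) by simp_all
qed

lemma tail_series_bounds: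
  assumes "0 < \<theta>" "\<theta> < 1" "r > 0"
  defines "L \<equiv> - ln \<theta>"
  shows "summable (\<lambda>i. \<theta> ^ (r + i) / (r + i))"
    and "E1 (L * r) \<le> (\<Sum>i. \<theta> ^ (r + i) / (r + i))"
    and "(\<Sum>i. \<theta> ^ (r + i) / (r + i)) \<le> E1 (L * r) + \<theta> ^ r / r"
proof -
  have L: "L > 0" using assms by simp
  define a where "a i = \<theta> ^ (r + i) / (r + i)" for i
  define g where "g i = E1 (L * (r + i))" for i
  show summable: "summable a"
  proof (rule summable_comparison_test)
    show "\<exists>N. \<forall>n\<ge>N. norm (a n) \<le> \<theta> ^ r * \<theta> ^ n"
      using assms by (auto simp: a_def divide_simps power_add)
    show "summable (\<lambda>n. \<theta> ^ r * \<theta> ^ n)"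
      using assms by (intro summable_mult summable_geometric) auto
  qed
  have telescope: "(\<Sum>i<n. g i - g (Suc i)) = g 0 - g n" for n
    by (rule sum_lessThan_telescope')
  have g_nonneg: "g n \<ge> 0" for n
    using E1_nonneg L assms(3) by (simp add: g_def)
  have "g \<longlonglongrightarrow> 0"
    unfolding g_def using L
    by (intro filterlim_compose[OF E1_tendsto_0]) real_asymp
  then have "(\<lambda>n. g 0 - g n) \<longlonglongrightarrow> g 0"
    by (auto intro: tendsto_eq_intros)
  moreover have "g 0 - g n \<le> sum a {..<n}" for n
  proof -
    have "g i - g (Suc i) \<le> a i" for i
      using E1_step_bounds(2)[OF assms(1,2), of "r+i"] assms by (simp add: a_def g_def L_def add_ac)
    then show ?thesis unfolding telescope[symmetric] by (intro sum_mono)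
  qed
  ultimately have "g 0 \<le> suminf a"
    by (intro LIMSEQ_le[OF _ summable_LIMSEQ[OF summable]]) auto
  then show "E1 (L * r) \<le> (\<Sum>i. \<theta> ^ (r + i) / (r + i))"
    by (simp add: a_def[abs_def] g_def)
  have "sum a {..<n} \<le> g 0 + \<theta> ^ r / r" for n
  proof (cases n)
    case (Suc m)
    have "a (Suc i) \<le> g i - g (Suc i)" for i
      using E1_step_bounds(1)[OF assms(1,2), of "r+i"] assms by (simp add: a_def g_def L_def add_ac)
    then have "(\<Sum>i<m. a (Suc i)) \<le> g 0 - g m"
      unfolding telescope[symmetric] by (intro sum_mono)
    moreover have "a 0 = \<theta> ^ r / r" by (simp add: a_def)
    ultimately show ?thesis
      unfolding Suc sum.lessThan_Suc_shift using g_nonneg[of m] by linarith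
  qed (use g_nonneg assms in simp)
  then show "(\<Sum>i. \<theta> ^ (r + i) / (r + i)) \<le> E1 (L * r) + \<theta> ^ r / r"
    using suminf_le_const[OF summable] by (simp add: a_def[abs_def] g_def)
qed

lemma Pr_bounds:
  assumes "0 < \<theta>" "\<theta> < 1" "r > 0"
  defines "L \<equiv> - ln \<theta>"
  shows "(1 - \<theta>) / L * F (L * r) \<le> Pr \<theta> r"
    and "Pr \<theta> r \<le> F (L * r) + (1 - \<theta>)"
proof -
  have L: "L > 0" using assms(1,2) by (simp add: L_def)
  define S where "S = (\<Sum>i. \<theta> ^ (r + i) / (r + i))"
  have Pr_eq: "Pr \<theta> r = r * (1 - \<theta>) * S"
    using assms(3) by (simp add: Pr_def S_def)
  have F_eq: "(1 - \<theta>) / L * F (L * r) = r * (1 - \<theta>) * E1 (L * r)"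
    using L by (simp add: F_def)
  have factor_nonneg: "0 \<le> r * (1 - \<theta>)" using assms(2) by simp
  show "(1 - \<theta>) / L * F (L * r) \<le> Pr \<theta> r"
    unfolding F_eq Pr_eq S_def
    using tail_series_bounds(2)[OF assms(1-3), folded L_def] factor_nonneg by (intro mult_left_mono)
  have "Pr \<theta> r \<le> r * (1 - \<theta>) * (E1 (L * r) + \<theta> ^ r / r)"
    unfolding Pr_eq S_def
    using tail_series_bounds(3)[OF assms(1-3), folded L_def] factor_nonneg by (intro mult_left_mono)
  also have "\<dots> = (1 - \<theta>) / L * F (L * r) + (1 - \<theta>) * \<theta> ^ r"
    unfolding F_eq using assms(3) by (simp add: algebra_simps)
  also have "\<dots> \<le> 1 * F (L * r) + (1 - \<theta>) * 1"
  proof (intro add_mono mult_right_mono mult_left_mono)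
    have "1 - \<theta> \<le> L"
      using ln_le_minus_one[of \<theta>] assms(1) by (simp add: L_def)
    then show "(1 - \<theta>) / L \<le> 1"
      using L by simp
  qed (use L assms(1-3) F_pos[of "L * r"] power_le_one[of \<theta> r] in auto)
  finally show "Pr \<theta> r \<le> F (L * r) + (1 - \<theta>)" by simp
qed

lemma mult_nat_ceiling_divide_bounds:
  fixes a L :: real
  assumes "a > 0" "L > 0"
  shows "nat \<lceil>a / L\<rceil> > 0" and "a \<le> L * nat \<lceil>a / L\<rceil>" and "L * nat \<lceil>a / L\<rceil> \<le> a + L"
proof -
  have "a / L > 0" using assms by simp
  then show "nat \<lceil>a / L\<rceil> > 0" by simp
  then have nat_eq: "real (nat \<lceil>a / L\<rceil>) = \<lceil>a / L\<rceil>" by simp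
  have "a / L \<le> \<lceil>a / L\<rceil>" by (rule le_of_int_ceiling)
  then have "a \<le> \<lceil>a / L\<rceil> * L" using assms(2) by (simp only: pos_divide_le_eq)
  then show "a \<le> L * nat \<lceil>a / L\<rceil>"
    unfolding nat_eq by (simp add: mult.commute)
  have "\<lceil>a / L\<rceil> \<le> a / L + 1" by (rule of_int_ceiling_le_add_one)
  then have "L * \<lceil>a / L\<rceil> \<le> L * (a / L + 1)" using assms(2) by (intro mult_left_mono) auto
  then show "L * nat \<lceil>a / L\<rceil> \<le> a + L"
    unfolding nat_eq using assms(2) by (simp add: algebra_simps)
qed

lemma eventually_in_unit_interval_at_left_1: "\<forall>\<^sub>F \<theta> in at_left (1::real). \<theta> \<in> {0<..<1}"
  by (rule eventually_at_left_real) simp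

lemma tendsto_one_minus_div_neg_ln: "((\<lambda>\<theta>. (1 - \<theta>) / - ln \<theta>) \<longlongrightarrow> 1) (at_left (1::real))"
  by real_asymp

context
  fixes \<alpha> :: real
  assumes alpha_pos: "\<alpha> > 0" and alpha_max: "\<forall>x>0. F x \<le> F \<alpha>"
begin

lemma F_derivative_at_max: "E1 \<alpha> - exp (- \<alpha>) = 0"
  by (rule DERIV_local_max[OF F_has_real_derivative[OF alpha_pos] alpha_pos]) (use alpha_max in auto)

lemma max_point_le_1: "\<alpha> \<le> 1"
  using F_derivative_neg[of \<alpha>] F_derivative_at_max by force

lemma F_strict_mono_below_max:
  assumes "0 < x" "x < y" "y \<le> \<alpha>" shows "F x < F y"
proof (rule DERIV_pos_imp_increasing_open[OF assms(2)])
  fix z assume "x < z" "z < y"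
  then have "E1 z - exp (- z) > 0"
    using F_derivative_strict_antimono[of z \<alpha>] F_derivative_at_max max_point_le_1 assms by auto
  then show "\<exists>d. (F has_real_derivative d) (at z) \<and> d > 0"
    using F_has_real_derivative[of z] \<open>x < z\<close> assms by auto
qed (use assms continuous_on_F in auto)

lemma F_strict_antimono_above_max:
  assumes "\<alpha> \<le> x" "x < y" shows "F y < F x"
proof (rule DERIV_neg_imp_decreasing_open[OF assms(2)])
  fix z assume "x < z" "z < y"
  then have "E1 z - exp (- z) < 0"
    using F_derivative_strict_antimono[of \<alpha> z] F_derivative_neg[of z] F_derivative_at_max
      alpha_pos assms by (cases "z \<le> 1") auto
  then show "\<exists>d. (F has_real_derivative d) (at z) \<and> d < 0"
    using F_has_real_derivative[of z] \<open>x < z\<close> alpha_pos assms by auto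
qed (use assms alpha_pos continuous_on_F in auto)

lemma F_gap_away_from_max:
  assumes "\<epsilon> > 0"
  obtains \<eta> where "\<eta> > 0" "\<And>x. x > 0 \<Longrightarrow> \<bar>x - \<alpha>\<bar> \<ge> \<epsilon> \<Longrightarrow> F x \<le> F \<alpha> - \<eta>"
proof -
  define \<eta> where "\<eta> = (if \<alpha> - \<epsilon> > 0 then min (F \<alpha> - F (\<alpha> + \<epsilon>)) (F \<alpha> - F (\<alpha> - \<epsilon>))
                       else F \<alpha> - F (\<alpha> + \<epsilon>))"
  have right: "F (\<alpha> + \<epsilon>) < F \<alpha>" using F_strict_antimono_above_max[of \<alpha> "\<alpha> + \<epsilon>"] assms by simp
  have "\<eta> > 0" using right F_strict_mono_below_max[of "\<alpha> - \<epsilon>" \<alpha>] assms by (auto simp: \<eta>_def)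
  moreover have "F x \<le> F \<alpha> - \<eta>" if "x > 0" "\<bar>x - \<alpha>\<bar> \<ge> \<epsilon>" for x
  proof (cases "x \<ge> \<alpha> + \<epsilon>")
    case True
    then have "F x \<le> F (\<alpha> + \<epsilon>)"
      using F_strict_antimono_above_max[of "\<alpha> + \<epsilon>" x] assms by (cases "x = \<alpha> + \<epsilon>") auto
    then show ?thesis unfolding \<eta>_def by auto
  next
    case False
    then have "x \<le> \<alpha> - \<epsilon>" using that by auto
    moreover have "F x \<le> F (\<alpha> - \<epsilon>)"
      using F_strict_mono_below_max[of x "\<alpha> - \<epsilon>"] \<open>x \<le> \<alpha> - \<epsilon>\<close> that assms
      by (cases "x = \<alpha> - \<epsilon>") auto
    ultimately show ?thesis unfolding \<eta>_def using that by auto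
  qed
  ultimately show ?thesis by (rule that)
qed

lemma tendsto_max_point_if_tendsto_F:
  assumes "((\<lambda>z. F (y z)) \<longlongrightarrow> F \<alpha>) G" "\<forall>\<^sub>F z in G. y z > 0"
  shows "(y \<longlongrightarrow> \<alpha>) G"
proof (rule tendstoI)
  fix \<epsilon> :: real assume "\<epsilon> > 0"
  then obtain \<eta> where "\<eta> > 0" and gap: "\<And>x. x > 0 \<Longrightarrow> \<bar>x - \<alpha>\<bar> \<ge> \<epsilon> \<Longrightarrow> F x \<le> F \<alpha> - \<eta>"
    using F_gap_away_from_max by blast
  from tendstoD[OF assms(1) \<open>\<eta> > 0\<close>] assms(2)
  show "\<forall>\<^sub>F z in G. dist (y z) \<alpha> < \<epsilon>"
  proof eventually_elim
    case (elim z)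
    then show ?case using gap[of "y z"] by (force simp: dist_real_def)
  qed
qed

lemma Pr_le_max_F:
  assumes "\<theta> \<in> {0<..<1}" shows "Pr \<theta> r \<le> F \<alpha> + (1 - \<theta>)"
proof (cases "r = 0")
  case True
  then show ?thesis using F_pos[OF alpha_pos] by (simp add: Pr_def)
next
  case False
  then have "- ln \<theta> * r > 0" using assms False by (simp add: mult_less_0_iff)
  then have "F (- ln \<theta> * r) \<le> F \<alpha>" using alpha_max by blast
  then show ?thesis using Pr_bounds(2)[of \<theta> r] False assms by simp
qed

lemma Pr_le_Popt: "\<theta> \<in> {0<..<1} \<Longrightarrow> Pr \<theta> r \<le> Popt \<theta>"
  unfolding Popt_def using Pr_le_max_F by (intro cSUP_upper bdd_aboveI) auto

lemma Popt_le_max_F: "\<theta> \<in> {0<..<1} \<Longrightarrow> Popt \<theta> \<le> F \<alpha> + (1 - \<theta>)"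
  unfolding Popt_def using Pr_le_max_F by (intro cSUP_least) auto

lemma Popt_tendsto_max_F: "(Popt \<longlongrightarrow> F \<alpha>) (at_left 1)"
proof (rule tendsto_sandwich)
  define r where "r \<theta> = nat \<lceil>\<alpha> / - ln \<theta>\<rceil>" for \<theta> :: real
  have r_bounds: "r \<theta> > 0" "\<alpha> \<le> - ln \<theta> * r \<theta>" "- ln \<theta> * r \<theta> \<le> \<alpha> + - ln \<theta>"
    if "\<theta> \<in> {0<..<1}" for \<theta>
    using mult_nat_ceiling_divide_bounds[of \<alpha> "- ln \<theta>"] alpha_pos that by (auto simp: r_def)
  have "((\<lambda>\<theta>. - ln \<theta> * r \<theta>) \<longlongrightarrow> \<alpha>) (at_left 1)"
  proof (rule tendsto_sandwich[of "\<lambda>_. \<alpha>" _ _ "\<lambda>\<theta>. \<alpha> + - ln \<theta>"])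
    show "\<forall>\<^sub>F \<theta> in at_left 1. \<alpha> \<le> - ln \<theta> * r \<theta>"
      using eventually_in_unit_interval_at_left_1 by eventually_elim (rule r_bounds(2))
    show "\<forall>\<^sub>F \<theta> in at_left 1. - ln \<theta> * r \<theta> \<le> \<alpha> + - ln \<theta>"
      using eventually_in_unit_interval_at_left_1 by eventually_elim (rule r_bounds(3))
    show "((\<lambda>\<theta>. \<alpha> + - ln \<theta>) \<longlongrightarrow> \<alpha>) (at_left 1)" by real_asymp
  qed simp
  then have "((\<lambda>\<theta>. (1 - \<theta>) / - ln \<theta> * F (- ln \<theta> * r \<theta>)) \<longlongrightarrow> 1 * F \<alpha>) (at_left 1)"
    by (intro tendsto_mult tendsto_one_minus_div_neg_ln isCont_tendsto_compose[OF isCont_F[OF alpha_pos]])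
  then show "((\<lambda>\<theta>. (1 - \<theta>) / - ln \<theta> * F (- ln \<theta> * r \<theta>)) \<longlongrightarrow> F \<alpha>) (at_left 1)" by simp
  show "\<forall>\<^sub>F \<theta> in at_left 1. (1 - \<theta>) / - ln \<theta> * F (- ln \<theta> * r \<theta>) \<le> Popt \<theta>"
    using eventually_in_unit_interval_at_left_1
  proof eventually_elim
    case (elim \<theta>)
    then have "(1 - \<theta>) / - ln \<theta> * F (- ln \<theta> * r \<theta>) \<le> Pr \<theta> (r \<theta>)"
      using Pr_bounds(1)[of \<theta> "r \<theta>"] r_bounds(1)[of \<theta>] by simp
    also have "\<dots> \<le> Popt \<theta>" using elim by (rule Pr_le_Popt)
    finally show ?case .
  qed
  show "\<forall>\<^sub>F \<theta> in at_left 1. Popt \<theta> \<le> F \<alpha> + (1 - \<theta>)"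
    using eventually_in_unit_interval_at_left_1 by eventually_elim (rule Popt_le_max_F)
  show "((\<lambda>\<theta>. F \<alpha> + (1 - \<theta>)) \<longlongrightarrow> F \<alpha>) (at_left 1)" by real_asymp
qed

lemma optimal_index_tendsto:
  fixes r :: "real \<Rightarrow> nat"
  assumes optimal: "\<forall>\<theta>\<in>{0<..<1}. Popt \<theta> = Pr \<theta> (r \<theta>)"
  shows "((\<lambda>\<theta>. (1 - \<theta>) * r \<theta>) \<longlongrightarrow> \<alpha>) (at_left 1)"
proof -
  define y where "y \<theta> = - ln \<theta> * r \<theta>" for \<theta> :: real
  have "\<forall>\<^sub>F \<theta> in at_left 1. F \<alpha> / 2 < Popt \<theta>"
    using order_tendstoD(1)[OF Popt_tendsto_max_F, of "F \<alpha> / 2"] F_pos[OF alpha_pos] by simp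
  moreover have "((\<lambda>\<theta>. 1 - \<theta>) \<longlongrightarrow> 0) (at_left (1::real))"
    by real_asymp
  then have "\<forall>\<^sub>F \<theta> in at_left 1. 1 - \<theta> < F \<alpha> / 2"
    using F_pos[OF alpha_pos] by (intro order_tendstoD(2)) auto
  ultimately have ev: "\<forall>\<^sub>F \<theta> in at_left 1. \<theta> \<in> {0<..<1} \<and> r \<theta> > 0 \<and> y \<theta> > 0"
    using eventually_in_unit_interval_at_left_1
  proof eventually_elim
    case (elim \<theta>)
    then have "Pr \<theta> (r \<theta>) \<noteq> 1 - \<theta>" using optimal by auto
    then have "r \<theta> > 0" by (rule contrapos_np) (simp add: Pr_def)
    then show ?case using elim by (simp add: y_def mult_less_0_iff)
  qed
  have "((\<lambda>\<theta>. F (y \<theta>)) \<longlongrightarrow> F \<alpha>) (at_left 1)"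
  proof (rule tendsto_sandwich[of "\<lambda>\<theta>. Popt \<theta> - (1 - \<theta>)" _ _ "\<lambda>_. F \<alpha>"])
    show "\<forall>\<^sub>F \<theta> in at_left 1. Popt \<theta> - (1 - \<theta>) \<le> F (y \<theta>)"
      using ev
    proof eventually_elim
      case (elim \<theta>)
      then have "Popt \<theta> = Pr \<theta> (r \<theta>)" using optimal by blast
      then show ?case using Pr_bounds(2)[of \<theta> "r \<theta>"] elim by (simp add: y_def)
    qed
    show "\<forall>\<^sub>F \<theta> in at_left 1. F (y \<theta>) \<le> F \<alpha>"
      using ev by eventually_elim (use alpha_max in blast)
    show "((\<lambda>\<theta>. Popt \<theta> - (1 - \<theta>)) \<longlongrightarrow> F \<alpha>) (at_left 1)"
      using tendsto_diff[OF Popt_tendsto_max_F \<open>((\<lambda>\<theta>. 1 - \<theta>) \<longlongrightarrow> 0) (at_left 1)\<close>] by simp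
  qed auto
  then have "(y \<longlongrightarrow> \<alpha>) (at_left 1)"
    using ev by (intro tendsto_max_point_if_tendsto_F) (simp_all add: eventually_conj_iff)
  then have "((\<lambda>\<theta>. (1 - \<theta>) / - ln \<theta> * y \<theta>) \<longlongrightarrow> 1 * \<alpha>) (at_left 1)"
    by (intro tendsto_mult tendsto_one_minus_div_neg_ln)
  then have "((\<lambda>\<theta>. (1 - \<theta>) / - ln \<theta> * y \<theta>) \<longlongrightarrow> \<alpha>) (at_left 1)"
    by simp
  then show ?thesis
  proof (rule Lim_transform_eventually)
    show "\<forall>\<^sub>F \<theta> in at_left 1. (1 - \<theta>) / - ln \<theta> * y \<theta> = (1 - \<theta>) * r \<theta>"
      using eventually_in_unit_interval_at_left_1 by eventually_elim (simp add: y_def)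
  qed
qed

end

theorem theorem3p2:
  fixes \<alpha> \<beta> :: real
  assumes alpha_pos: "\<alpha> > 0"
    and alpha_max: "\<forall>x>0. F x \<le> F \<alpha>"
    and beta_def: "\<beta> = F \<alpha>"
  shows "(\<forall>rstar :: real \<Rightarrow> nat.
            (\<forall>\<theta>\<in>{0<..<1}. Popt \<theta> = Pr \<theta> (rstar \<theta>)) \<longrightarrow>
            ((\<lambda>\<theta>. (1 - \<theta>) * real (rstar \<theta>)) \<longlongrightarrow> \<alpha>) (at_left 1))
         \<and> (Popt \<longlongrightarrow> \<beta>) (at_left 1)"
  using optimal_index_tendsto[OF alpha_pos alpha_max] Popt_tendsto_max_F[OF alpha_pos alpha_max]
  by (simp add: beta_def)

end
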